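(* Under the setting of the cluster-growth decomposition (with $v_m$ following the canonical grain extension relative to $\mathbf a$, and $F=F_*\sqcup F_\circ\subset E_d(\square_m)$): (1) if $F_\circ\neq\emptyset$, then $(D_Fv_m)(x)=0$ for all $x\in\mathscr C_{bc}^{\mathbf a^F}(\square_m)$; (2) for $x\in\square_m\setminus\mathscr C_{bc}^{\mathbf a^F}(\square_m)$, if $F_\circ$ is not contained in the set of edges having both endpoints in $\mathcal O^{\mathbf a^{F_\circ}}(x)$, then $(D_Fv_m)(x)=0$.
   Context: Bond configurations on $\mathbb Z^d$, $\ell^\infty$ distance $\mathrm{dist}$, $\square_m=\mathbb Z^d\cap(-3^m/2,3^m/2)^d$, $E_d(\square_m)$ its edges, $\partial\square_m=\{x\in\square_m:\exists y\sim x,y\notin\square_m\}$. For a configuration $\mathbf b$: $\mathscr C_{bc}^{\mathbf b}(\square_m)$ is the set of $x\in\square_m$ joined to $\partial\square_m$ by a $\mathbf b$-open path inside $\square_m$; $\mathcal O^{\mathbf b}(x)$ the set of vertices joined to $x$ by a $\mathbf b$-open path inside $\square_m$. $\mathbf a^G(e)=\mathbf 1_{e\in G}+\mathbf a(e)\mathbf 1_{e\notin G}$. Canonical grain relative to $\mathbf a$: $[x]^G=x$ if $x\in\mathscr C_{bc}^{\mathbf a^G}(\square_m)$, else $[x]^G=\arg\min_{y\in\mathscr C_{bc}^{\mathbf a}(\square_m)}\mathrm{dist}(y,\mathcal O^{\mathbf a^G}(x))$ (lexicographic tie-break). Fix $\xi$; $h^{\mathbf b}$ is the unique function on $\mathscr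 C_{bc}^{\mathbf b}(\square_m)$ equal to $\xi\cdot x$ on $\partial\square_m$ and $\mathbf b$-harmonic at its other points; $v_m^G(x):=h^{\mathbf a^G}([x]^G)$ and $(D_Fv_m)(x)=\sum_{G\subset F}(-1)^{|F\setminus G|}v_m^G(x)$. $F_*=\{e\in F:$ both endpoints of $e$ in $\mathscr C_{bc}^{\mathbf a^F}(\square_m)\}$, $F_\circ=F\setminus F_*$. *)

theory Defs
  imports Complex_Main
begin

text \<open>Points of Z^d are functions nat => int vanishing at coordinates >= d.\<close>
type_synonym pt = "nat \<Rightarrow> int"
type_synonym edge = "pt set"
type_synonym config = "edge \<Rightarrow> bool"

definition Zd :: "nat \<Rightarrow> pt set" where
  "Zd d = {x. \<forall>i\<ge>d. x i = 0}"

definition adj :: "nat \<Rightarrow> pt \<Rightarrow> pt \<Rightarrow> bool" where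
  "adj d x y \<longleftrightarrow> x \<in> Zd d \<and> y \<in> Zd d \<and> (\<Sum>i<d. \<bar>x i - y i\<bar>) = 1"

definition linf :: "nat \<Rightarrow> pt \<Rightarrow> pt \<Rightarrow> int" where
  "linf d x y = Max (insert 0 ((\<lambda>i. \<bar>x i - y i\<bar>) ` {..<d}))"

definition setdist :: "nat \<Rightarrow> pt \<Rightarrow> pt set \<Rightarrow> int" where
  "setdist d y S = Min ((\<lambda>s. linf d y s) ` S)"

definition lex_less :: "nat \<Rightarrow> pt \<Rightarrow> pt \<Rightarrow> bool" where
  "lex_less d x y \<longleftrightarrow> (\<exists>k<d. (\<forall>i<k. x i = y i) \<and> x k < y k)"

definition box :: "nat \<Rightarrow> nat \<Rightarrow> pt set" where
  "box d m = {x \<in> Zd d. \<forall>i<d. \<bar>real_of_int (x i)\<bar> < 3 ^ m / 2}"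

definition bdry :: "nat \<Rightarrow> nat \<Rightarrow> pt set" where
  "bdry d m = {x \<in> box d m. \<exists>y. adj d x y \<and> y \<notin> box d m}"

definition edges :: "nat \<Rightarrow> nat \<Rightarrow> edge set" where
  "edges d m = {{x, y} | x y. x \<in> box d m \<and> y \<in> box d m \<and> adj d x y}"

definition ostep :: "nat \<Rightarrow> nat \<Rightarrow> config \<Rightarrow> pt \<Rightarrow> pt \<Rightarrow> bool" where
  "ostep d m b x y \<longleftrightarrow> x \<in> box d m \<and> y \<in> box d m \<and> adj d x y \<and> b {x, y}"

definition Ocl :: "nat \<Rightarrow> nat \<Rightarrow> config \<Rightarrow> pt \<Rightarrow> pt set" where
  "Ocl d m b x = {y. (ostep d m b)\<^sup>*\<^sup>* x y}"

definition Cbc :: "nat \<Rightarrow> nat \<Rightarrow> config \<Rightarrow> pt set" where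
  "Cbc d m b = {x \<in> box d m. \<exists>y \<in> bdry d m. (ostep d m b)\<^sup>*\<^sup>* x y}"

definition cfg_upd :: "config \<Rightarrow> edge set \<Rightarrow> config" where
  "cfg_upd a G = (\<lambda>e. e \<in> G \<or> a e)"

definition affine :: "nat \<Rightarrow> (nat \<Rightarrow> real) \<Rightarrow> pt \<Rightarrow> real" where
  "affine d \<xi> x = (\<Sum>i<d. \<xi> i * real_of_int (x i))"

definition harm :: "nat \<Rightarrow> nat \<Rightarrow> (nat \<Rightarrow> real) \<Rightarrow> config \<Rightarrow> pt \<Rightarrow> real" where
  "harm d m \<xi> b = (THE h.
      (\<forall>x \<in> bdry d m. h x = affine d \<xi> x) \<and>
      (\<forall>x \<in> Cbc d m b - bdry d m.
          (\<Sum>y \<in> {y \<in> box d m. ostep d m b x y}. h y - h x) = 0) \<and>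
      (\<forall>x. x \<notin> Cbc d m b \<longrightarrow> h x = 0))"

definition grain :: "nat \<Rightarrow> nat \<Rightarrow> config \<Rightarrow> edge set \<Rightarrow> pt \<Rightarrow> pt" where
  "grain d m a G x =
     (if x \<in> Cbc d m (cfg_upd a G) then x
      else (let M = {y \<in> Cbc d m a.
                       \<forall>z \<in> Cbc d m a. setdist d y (Ocl d m (cfg_upd a G) x)
                                       \<le> setdist d z (Ocl d m (cfg_upd a G) x)}
            in THE y. y \<in> M \<and> (\<forall>z \<in> M. z \<noteq> y \<longrightarrow> lex_less d y z)))"

definition vm :: "nat \<Rightarrow> nat \<Rightarrow> (nat \<Rightarrow> real) \<Rightarrow> config \<Rightarrow> edge set \<Rightarrow> pt \<Rightarrow> real" where
  "vm d m \<xi> a G x = harm d m \<xi> (cfg_upd a G) (grain d m a G x)"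

definition DF :: "nat \<Rightarrow> nat \<Rightarrow> (nat \<Rightarrow> real) \<Rightarrow> config \<Rightarrow> edge set \<Rightarrow> pt \<Rightarrow> real" where
  "DF d m \<xi> a F x = (\<Sum>G \<in> Pow F. (-1) ^ card (F - G) * vm d m \<xi> a G x)"

definition Fstar :: "nat \<Rightarrow> nat \<Rightarrow> config \<Rightarrow> edge set \<Rightarrow> edge set" where
  "Fstar d m a F = {e \<in> F. e \<subseteq> Cbc d m (cfg_upd a F)}"

definition Fcirc :: "nat \<Rightarrow> nat \<Rightarrow> config \<Rightarrow> edge set \<Rightarrow> edge set" where
  "Fcirc d m a F = F - Fstar d m a F"

end

theory Submission
  imports Defs "HOL-Library.Disjoint_Sets"
begin

(*
  Let e be an edge of F_o. It is open in a^F but not contained in the boundary cluster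
  C_bc(a^F), so it misses that cluster, and by monotonicity the boundary clusters of all
  a^G with G a subset of F. Adding e to G therefore changes neither the boundary cluster
  nor the harmonic function on it. If e also misses the a^F-cluster of x, it does not
  change the cluster of x either, hence not the grain [x]^G. So v^G(x) = v^(G + e)(x) for
  all G in F - {e}, and the alternating sum (D_F v)(x) cancels in pairs.
  In case (1) the cluster of x lies inside C_bc(a^F). In case (2) x lies outside it, so
  the a^F-cluster of x uses no edge of F_* and equals its a^(F_o)-cluster; an edge of F_o,
  open in a^(F_o) and not contained in this cluster, must miss it.
*)

lemma alternating_sum_Pow_eq_0:
  fixes f :: "'a set \<Rightarrow> 'b::comm_ring_1"
  assumes "e \<in> F" and f_insert: "\<And>G. G \<subseteq> F - {e} \<Longrightarrow> f (insert e G) = f G"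
  shows "(\<Sum>G\<in>Pow F. (-1) ^ card (F - G) * f G) = 0"
proof (cases "finite F")
  case True
  define flip where "flip G = (if e \<in> G then G - {e} else insert e G)" for G :: "'a set"
  show ?thesis
  proof (rule sum_involution_eq_0[where h = flip])
    fix G assume G: "G \<in> Pow F"
    then show "flip G \<in> Pow F" "flip (flip G) = G" "flip G \<noteq> G"
      using \<open>e \<in> F\<close> by (auto simp: flip_def)
    have "f (insert e (G - {e})) = f (G - {e})"
      using G by (intro f_insert) auto
    then have f_flip: "f (flip G) = f G"
      by (cases "e \<in> G") (simp_all add: flip_def insert_absorb)
    have "card (F - G) = Suc (card (F - flip G)) \<or> card (F - flip G) = Suc (card (F - G))"
    proof (cases "e \<in> G")
      case True
      then have "F - flip G = insert e (F - G)" using \<open>e \<in> F\<close> by (auto simp: flip_def)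
      then show ?thesis using \<open>finite F\<close> \<open>e \<in> G\<close> by simp
    next
      case False
      then have "flip G = insert e G" by (simp add: flip_def)
      then have "F - G = insert e (F - flip G)" "e \<notin> F - flip G" using \<open>e \<in> F\<close> False by auto
      then show ?thesis using \<open>finite F\<close> by simp
    qed
    then show "(-1) ^ card (F - flip G) * f (flip G) + (-1) ^ card (F - G) * f G = 0"
      unfolding f_flip by auto
  qed
qed simp

lemma rtranclp_cong_on_reachable:
  assumes "\<And>u. R'\<^sup>*\<^sup>* x u \<Longrightarrow> R u = R' u"
  shows "R\<^sup>*\<^sup>* x y \<longleftrightarrow> R'\<^sup>*\<^sup>* x y"
proof
  show "R\<^sup>*\<^sup>* x y" if "R'\<^sup>*\<^sup>* x y"
    using that by induction (auto intro: rtranclp.rtrancl_into_rtrancl simp: assms)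
  show "R'\<^sup>*\<^sup>* x y" if "R\<^sup>*\<^sup>* x y"
    using that by induction (auto intro: rtranclp.rtrancl_into_rtrancl simp: assms)
qed

lemma ostep_sym: "ostep d m b x y \<Longrightarrow> ostep d m b y x"
  unfolding ostep_def adj_def by (auto simp: insert_commute abs_minus_commute)

lemma ostep_rtranclp_sym: "(ostep d m b)\<^sup>*\<^sup>* x y \<Longrightarrow> (ostep d m b)\<^sup>*\<^sup>* y x"
  by (induction rule: rtranclp_induct) (auto intro: converse_rtranclp_into_rtranclp ostep_sym)

lemma ostep_rtranclp_box: "(ostep d m b)\<^sup>*\<^sup>* x y \<Longrightarrow> x \<in> box d m \<Longrightarrow> y \<in> box d m"
  by (induction rule: rtranclp_induct) (auto simp: ostep_def)

lemma ostep_cfg_upd_mono: "G \<subseteq> H \<Longrightarrow> ostep d m (cfg_upd a G) \<le> ostep d m (cfg_upd a H)"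
  by (auto simp: ostep_def cfg_upd_def)

lemma ostep_cfg_upd_insert:
  "u \<notin> e \<Longrightarrow> ostep d m (cfg_upd a (insert e G)) u = ostep d m (cfg_upd a G) u"
  by (auto simp: ostep_def cfg_upd_def)

lemma Ocl_cfg_upd_mono: "G \<subseteq> H \<Longrightarrow> Ocl d m (cfg_upd a G) x \<subseteq> Ocl d m (cfg_upd a H) x"
  unfolding Ocl_def using rtranclp_mono[OF ostep_cfg_upd_mono] by blast

lemma Cbc_cfg_upd_mono: "G \<subseteq> H \<Longrightarrow> Cbc d m (cfg_upd a G) \<subseteq> Cbc d m (cfg_upd a H)"
  unfolding Cbc_def using rtranclp_mono[OF ostep_cfg_upd_mono] by blast

lemma Ocl_ostep_closed: "u \<in> Ocl d m b x \<Longrightarrow> ostep d m b u v \<Longrightarrow> v \<in> Ocl d m b x"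
  by (auto simp: Ocl_def)

lemma Cbc_rtranclp_closed:
  assumes "(ostep d m b)\<^sup>*\<^sup>* u v" "v \<in> Cbc d m b"
  shows "u \<in> Cbc d m b"
proof -
  have "u \<in> box d m"
    using assms by (auto simp: Cbc_def intro: ostep_rtranclp_box ostep_rtranclp_sym)
  then show ?thesis
    using assms by (auto simp: Cbc_def intro: rtranclp_trans)
qed

lemma Cbc_rtranclp_iff: "(ostep d m b)\<^sup>*\<^sup>* u v \<Longrightarrow> u \<in> Cbc d m b \<longleftrightarrow> v \<in> Cbc d m b"
  by (metis Cbc_rtranclp_closed ostep_rtranclp_sym)

lemma Cbc_ostep_closed: "u \<in> Cbc d m b \<Longrightarrow> ostep d m b u v \<Longrightarrow> v \<in> Cbc d m b"
  using Cbc_rtranclp_iff[OF r_into_rtranclp] by blast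

lemma Ocl_subset_Cbc: "x \<in> Cbc d m b \<Longrightarrow> Ocl d m b x \<subseteq> Cbc d m b"
  by (auto simp: Ocl_def dest: Cbc_rtranclp_iff)

lemma Ocl_disjoint_Cbc: "x \<notin> Cbc d m b \<Longrightarrow> Ocl d m b x \<inter> Cbc d m b = {}"
  by (auto simp: Ocl_def dest: Cbc_rtranclp_iff)

lemma open_edge_subset_closed:
  assumes "e \<in> edges d m" "b e" "e \<inter> S \<noteq> {}"
    and "\<And>u v. u \<in> S \<Longrightarrow> ostep d m b u v \<Longrightarrow> v \<in> S"
  shows "e \<subseteq> S"
proof -
  obtain p q where e: "e = {p, q}" and "ostep d m b p q"
    using assms(1,2) by (auto simp: edges_def ostep_def)
  then show ?thesis
    using assms(3,4) ostep_sym by blast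
qed

lemma open_edge_disjoint_Ocl:
  assumes "e \<in> edges d m" "b e" "\<not> e \<subseteq> Ocl d m b x"
  shows "e \<inter> Ocl d m b x = {}"
proof (rule ccontr)
  assume "e \<inter> Ocl d m b x \<noteq> {}"
  with assms(1,2) have "e \<subseteq> Ocl d m b x"
    by (rule open_edge_subset_closed) (rule Ocl_ostep_closed)
  with assms(3) show False ..
qed

lemma Ocl_cong:
  assumes "\<forall>u \<in> Ocl d m b' x. ostep d m b u = ostep d m b' u"
  shows "Ocl d m b x = Ocl d m b' x"
  using rtranclp_cong_on_reachable[of "ostep d m b'" x "ostep d m b"] assms
  by (auto simp: Ocl_def)

lemma Cbc_cong:
  assumes "\<forall>u \<in> Cbc d m b'. ostep d m b u = ostep d m b' u"
  shows "Cbc d m b = Cbc d m b'"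
proof -
  have "(ostep d m b)\<^sup>*\<^sup>* y x \<longleftrightarrow> (ostep d m b')\<^sup>*\<^sup>* y x" if "y \<in> bdry d m" for x y
  proof (rule rtranclp_cong_on_reachable)
    fix u assume "(ostep d m b')\<^sup>*\<^sup>* y u"
    moreover have "y \<in> Cbc d m b'"
      using that by (auto simp: Cbc_def bdry_def)
    ultimately show "ostep d m b u = ostep d m b' u"
      using assms Cbc_rtranclp_iff by blast
  qed
  then show ?thesis
    unfolding Cbc_def by (metis ostep_rtranclp_sym)
qed

lemma harm_cong:
  assumes "\<forall>u \<in> Cbc d m b'. ostep d m b u = ostep d m b' u"
  shows "harm d m \<xi> b = harm d m \<xi> b'"
proof -
  have "{y \<in> box d m. ostep d m b x y} = {y \<in> box d m. ostep d m b' x y}"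
    if "x \<in> Cbc d m b' - bdry d m" for x
    using that assms by simp
  then show ?thesis
    unfolding harm_def Cbc_cong[OF assms]
    by (intro arg_cong[where f = The] ext conj_cong refl ball_cong) simp_all
qed

lemma vm_cfg_upd_insert:
  assumes "e \<inter> Cbc d m (cfg_upd a (insert e G)) = {}"
    and "e \<inter> Ocl d m (cfg_upd a (insert e G)) x = {}"
  shows "vm d m \<xi> a (insert e G) x = vm d m \<xi> a G x"
proof -
  have "\<forall>u \<in> Cbc d m (cfg_upd a (insert e G)).
          ostep d m (cfg_upd a G) u = ostep d m (cfg_upd a (insert e G)) u"
    using assms(1) by (metis ostep_cfg_upd_insert disjoint_iff)
  note Cbc_eq = Cbc_cong[OF this] and harm_eq = harm_cong[OF this]
  have "\<forall>u \<in> Ocl d m (cfg_upd a (insert e G)) x.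
          ostep d m (cfg_upd a G) u = ostep d m (cfg_upd a (insert e G)) u"
    using assms(2) by (metis ostep_cfg_upd_insert disjoint_iff)
  note Ocl_eq = Ocl_cong[OF this]
  show ?thesis
    unfolding vm_def grain_def Cbc_eq Ocl_eq harm_eq by (rule refl)
qed

lemma DF_eq_0_if_isolated_edge:
  assumes "e \<in> F" "e \<inter> Cbc d m (cfg_upd a F) = {}" "e \<inter> Ocl d m (cfg_upd a F) x = {}"
  shows "DF d m \<xi> a F x = 0"
  unfolding DF_def
proof (rule alternating_sum_Pow_eq_0[OF \<open>e \<in> F\<close>])
  fix G assume "G \<subseteq> F - {e}"
  then have "insert e G \<subseteq> F"
    using \<open>e \<in> F\<close> by blast
  then have "Cbc d m (cfg_upd a (insert e G)) \<subseteq> Cbc d m (cfg_upd a F)"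
    and "Ocl d m (cfg_upd a (insert e G)) x \<subseteq> Ocl d m (cfg_upd a F) x"
    by (rule Cbc_cfg_upd_mono Ocl_cfg_upd_mono)+
  then have "e \<inter> Cbc d m (cfg_upd a (insert e G)) = {}"
    and "e \<inter> Ocl d m (cfg_upd a (insert e G)) x = {}"
    using assms(2,3) by auto
  then show "vm d m \<xi> a (insert e G) x = vm d m \<xi> a G x"
    by (rule vm_cfg_upd_insert)
qed

lemma Fcirc_disjoint_Cbc:
  assumes "F \<subseteq> edges d m" "e \<in> Fcirc d m a F"
  shows "e \<inter> Cbc d m (cfg_upd a F) = {}"
proof (rule ccontr)
  assume meets: "e \<inter> Cbc d m (cfg_upd a F) \<noteq> {}"
  have "e \<in> edges d m" "cfg_upd a F e"
    using assms by (auto simp: Fcirc_def cfg_upd_def)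
  then have "e \<subseteq> Cbc d m (cfg_upd a F)"
    using meets by (rule open_edge_subset_closed) (rule Cbc_ostep_closed)
  then show False
    using assms(2) by (simp add: Fcirc_def Fstar_def)
qed

lemma Ocl_Fcirc_eq:
  assumes "x \<notin> Cbc d m (cfg_upd a F)"
  shows "Ocl d m (cfg_upd a (Fcirc d m a F)) x = Ocl d m (cfg_upd a F) x"
proof (rule Ocl_cong, rule ballI)
  fix u assume "u \<in> Ocl d m (cfg_upd a F) x"
  then have "u \<notin> Cbc d m (cfg_upd a F)"
    using Ocl_disjoint_Cbc[OF assms] by blast
  then have "{u, v} \<notin> Fstar d m a F" for v
    by (simp add: Fstar_def)
  then show "ostep d m (cfg_upd a (Fcirc d m a F)) u = ostep d m (cfg_upd a F) u"
    by (auto simp: fun_eq_iff ostep_def cfg_upd_def Fcirc_def)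
qed

lemma DF_eq_0_on_Cbc:
  assumes "F \<subseteq> edges d m" "e \<in> Fcirc d m a F" "x \<in> Cbc d m (cfg_upd a F)"
  shows "DF d m \<xi> a F x = 0"
proof -
  have "e \<in> F"
    using assms(2) by (simp add: Fcirc_def)
  have off_Cbc: "e \<inter> Cbc d m (cfg_upd a F) = {}"
    using Fcirc_disjoint_Cbc[OF assms(1,2)] .
  moreover have "Ocl d m (cfg_upd a F) x \<subseteq> Cbc d m (cfg_upd a F)"
    using Ocl_subset_Cbc[OF assms(3)] .
  ultimately have "e \<inter> Ocl d m (cfg_upd a F) x = {}"
    by blast
  with \<open>e \<in> F\<close> off_Cbc show ?thesis
    by (rule DF_eq_0_if_isolated_edge)
qed

lemma DF_eq_0_off_Cbc:
  assumes "F \<subseteq> edges d m" "e \<in> Fcirc d m a F" "x \<notin> Cbc d m (cfg_upd a F)"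
    and "\<not> e \<subseteq> Ocl d m (cfg_upd a (Fcirc d m a F)) x"
  shows "DF d m \<xi> a F x = 0"
proof -
  have "e \<in> F" "e \<in> edges d m"
    using assms(1,2) by (auto simp: Fcirc_def)
  moreover have "cfg_upd a (Fcirc d m a F) e"
    using assms(2) by (simp add: cfg_upd_def)
  ultimately have "e \<inter> Ocl d m (cfg_upd a (Fcirc d m a F)) x = {}"
    using assms(4) by (intro open_edge_disjoint_Ocl)
  then have "e \<inter> Ocl d m (cfg_upd a F) x = {}"
    by (simp add: Ocl_Fcirc_eq[OF assms(3)])
  with \<open>e \<in> F\<close> Fcirc_disjoint_Cbc[OF assms(1,2)] show ?thesis
    by (rule DF_eq_0_if_isolated_edge)
qed

theorem corollary6p3:
  fixes d m :: nat and \<xi> :: "nat \<Rightarrow> real" and a :: config and F :: "edge set"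
  assumes "d \<ge> 1" and "F \<subseteq> edges d m"
  shows "(Fcirc d m a F \<noteq> {} \<longrightarrow>
            (\<forall>x \<in> Cbc d m (cfg_upd a F). DF d m \<xi> a F x = 0))
       \<and> (\<forall>x \<in> box d m - Cbc d m (cfg_upd a F).
            \<not> (Fcirc d m a F \<subseteq>
                 {e \<in> edges d m. e \<subseteq> Ocl d m (cfg_upd a (Fcirc d m a F)) x})
            \<longrightarrow> DF d m \<xi> a F x = 0)"
proof (intro conjI impI ballI)
  fix x assume "Fcirc d m a F \<noteq> {}" and "x \<in> Cbc d m (cfg_upd a F)"
  then show "DF d m \<xi> a F x = 0"
    using DF_eq_0_on_Cbc[OF assms(2)] by blast
next
  fix x assume x: "x \<in> box d m - Cbc d m (cfg_upd a F)"
    and "\<not> Fcirc d m a F \<subseteq> {e \<in> edges d m. e \<subseteq> Ocl d m (cfg_upd a (Fcirc d m a F)) x}"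
  moreover have "Fcirc d m a F \<subseteq> edges d m"
    using assms(2) by (auto simp: Fcirc_def)
  ultimately obtain e where "e \<in> Fcirc d m a F" "\<not> e \<subseteq> Ocl d m (cfg_upd a (Fcirc d m a F)) x"
    by blast
  with x show "DF d m \<xi> a F x = 0"
    using DF_eq_0_off_Cbc[OF assms(2)] by blast
qed

end
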